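(* Let $G=(V,E)$ be a bipartite graph (parallel edges allowed) with capacities $b_v\ge0$, demands $d_{u,e},d_{v,e}\ge0$ and profits $p_e\ge0$ for each edge $e=uv$, such that $d_{v,e}\le b_v$ for all $v$ and $e\in\delta(v)$. Let $M'\subseteq E$ satisfy $\sum_{e\in\delta_{M'}(v)\setminus L(v)}d_{v,e}\le b_v$ for every $v\in V$, where $L(v)$ is a set of the two edges of $\delta_{M'}(v)$ with highest $d_{v,e}$ (or $L(v)=\delta_{M'}(v)$ if $|\delta_{M'}(v)|\le1$). Then one can find $M\subseteq M'$ with $\sum_{e\in\delta_M(v)}d_{v,e}\le b_v$ for all $v\in V$ and $p(M)\ge\frac{p(M')}{7}$.
   Context: $\delta(v)$ is the set of edges incident to $v$, $\delta_{M'}(v)=\delta(v)\cap M'$, $p(M)=\sum_{e\in M}p_e$. *)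

theory Defs
  imports Complex_Main
begin

text \<open>A multigraph: a finite set E of edge identifiers, each with a pair of endpoints
  given by ends :: 'e => 'v * 'v (parallel edges = distinct identifiers with equal ends).\<close>

definition incident :: "('e \<Rightarrow> 'v \<times> 'v) \<Rightarrow> 'v \<Rightarrow> 'e \<Rightarrow> bool" where
  "incident ends v e \<longleftrightarrow> v = fst (ends e) \<or> v = snd (ends e)"

definition delta :: "('e \<Rightarrow> 'v \<times> 'v) \<Rightarrow> 'e set \<Rightarrow> 'v \<Rightarrow> 'e set" where
  "delta ends F v = {e \<in> F. incident ends v e}"

definition bipartite :: "'v set \<Rightarrow> 'e set \<Rightarrow> ('e \<Rightarrow> 'v \<times> 'v) \<Rightarrow> bool" where
  "bipartite V E ends \<longleftrightarrow> (\<forall>e\<in>E. fst (ends e) \<in> V \<and> snd (ends e) \<in> V) \<and>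
     (\<exists>A B. A \<inter> B = {} \<and> A \<union> B = V \<and>
        (\<forall>e\<in>E. (fst (ends e) \<in> A \<and> snd (ends e) \<in> B) \<or> (fst (ends e) \<in> B \<and> snd (ends e) \<in> A)))"

definition top_two :: "('e \<Rightarrow> real) \<Rightarrow> 'e set \<Rightarrow> 'e set \<Rightarrow> bool" where
  "top_two w S L \<longleftrightarrow> L \<subseteq> S \<and> card L = min 2 (card S) \<and>
     (\<forall>e\<in>L. \<forall>f\<in>S - L. w f \<le> w e)"

end

theory Submission
  imports Defs
begin

text \<open>A set X \<subseteq> M' respects the capacity at v as
  soon as it either avoids L(v), by hypothesis, or has at most one edge at v, since d v e \<le> b v.
  Call an edge heavy at an endpoint if it lies in L of that endpoint. With A, B the sides of the
  bipartition, M' splits into seven such sets: the edges heavy at neither end; the edges heavy only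
  at their A-end, split into two by their rank in L of that end; likewise for B; and the edges heavy
  at both ends, which form a bipartite graph of maximum degree two and hence split into two
  matchings. One of the seven sets carries at least p(M')/7.\<close>

lemma singleton_if_card_le_1:
  assumes "finite X" "card X \<le> 1" "X \<noteq> {}"
  shows "\<exists>x. X = {x}"
proof -
  have "card X = 1" using assms by (simp add: le_antisym Suc_leI card_gt_0_iff)
  then show ?thesis by (rule card_1_singletonE) blast
qed

lemma card_le_1_if_inj_on_const:
  assumes "inj_on g A" "\<forall>x\<in>A. g x = k"
  shows "card A \<le> 1"
proof -
  have "\<forall>x\<in>A. \<forall>y\<in>A. x = y" using assms unfolding inj_on_def by metis
  then show ?thesis by (cases "finite A") (simp_all add: card_le_Suc0_iff_eq)
qed

lemma inj_on_bool_if_card_le_2: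
  assumes "finite A" "card A \<le> 2"
  shows "\<exists>r :: 'a \<Rightarrow> bool. inj_on r A"
proof (cases "A = {}")
  case False
  then obtain x where "x \<in> A" by blast
  have "\<forall>y\<in>A - {x}. \<forall>z\<in>A - {x}. y = z"
    using assms \<open>x \<in> A\<close> by (simp add: card_le_Suc0_iff_eq[symmetric] card_Diff_singleton)
  then have "inj_on (\<lambda>y. y = x) A" unfolding inj_on_def by blast
  then show ?thesis by blast
qed simp

lemma exists_max_weight:
  fixes w :: "'a \<Rightarrow> 'b::linorder"
  assumes "finite S" "S \<noteq> {}"
  shows "\<exists>x\<in>S. \<forall>y\<in>S. w y \<le> w x"
proof -
  have "Max (w ` S) \<in> w ` S" using assms by simp
  then obtain x where "x \<in> S" "w x = Max (w ` S)" by auto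
  moreover have "\<forall>y\<in>S. w y \<le> Max (w ` S)" using assms(1) by simp
  ultimately show ?thesis by metis
qed

lemma delta_mono: "F \<subseteq> G \<Longrightarrow> delta ends F v \<subseteq> delta ends G v"
  unfolding delta_def by auto

lemma card_delta_mono: "F \<subseteq> G \<Longrightarrow> finite G \<Longrightarrow> card (delta ends F v) \<le> card (delta ends G v)"
  by (rule card_mono) (auto simp: delta_def)

lemma incident_other_endpoint:
  assumes "incident ends v e"
  obtains u where "\<And>w. incident ends w e \<longleftrightarrow> w = v \<or> w = u"
  using assms unfolding incident_def by (metis prod.collapse)

lemma delta_fun_upd_subset:
  "delta (ends(e := (x, y))) F v \<subseteq> insert e (delta ends F v)"
  "v \<noteq> x \<Longrightarrow> v \<noteq> y \<Longrightarrow> delta (ends(e := (x, y))) F v \<subseteq> delta ends F v"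
  unfolding delta_def incident_def by auto

lemma card_delta_reroute_le:
  assumes "finite F" "card (delta ends F v) \<le> 2" "f \<in> delta ends F v" "f \<in> D"
  shows "card (delta (ends(e := (x, y))) (F - D) v) \<le> 2"
proof -
  have fin: "finite (delta ends F v)" using \<open>finite F\<close> unfolding delta_def by auto
  have "delta ends (F - D) v \<subseteq> delta ends F v - {f}"
    using assms(4) unfolding delta_def by auto
  then have "delta (ends(e := (x, y))) (F - D) v \<subseteq> insert e (delta ends F v - {f})"
    using delta_fun_upd_subset(1)[of ends e x y "F - D" v] by blast
  then have "card (delta (ends(e := (x, y))) (F - D) v) \<le> card (insert e (delta ends F v - {f}))"
    using fin by (intro card_mono) auto
  also have "\<dots> \<le> Suc (card (delta ends F v - {f}))" by (simp add: card_insert_le_m1)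
  also have "\<dots> \<le> 2" using assms(2,3) fin by (simp add: card_Diff_singleton)
  finally show ?thesis .
qed

section \<open>Bipartite multigraphs of maximum degree two are 2-edge-colourable\<close>

definition proper_edge_colouring :: "('e \<Rightarrow> 'v \<times> 'v) \<Rightarrow> 'e set \<Rightarrow> ('e \<Rightarrow> 'c) \<Rightarrow> bool" where
  "proper_edge_colouring ends F c \<longleftrightarrow> (\<forall>v. inj_on c (delta ends F v))"

lemma card_delta_colour_class_le_1:
  assumes "proper_edge_colouring ends F c"
  shows "card (delta ends {e \<in> F. c e = k} v) \<le> 1"
proof (rule card_le_1_if_inj_on_const)
  have "delta ends {e \<in> F. c e = k} v \<subseteq> delta ends F v" by (rule delta_mono) blast
  then show "inj_on c (delta ends {e \<in> F. c e = k} v)"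
    using assms unfolding proper_edge_colouring_def by (blast intro: inj_on_subset)
  show "\<forall>e\<in>delta ends {e \<in> F. c e = k} v. c e = k" unfolding delta_def by blast
qed

lemma proper_edge_colouring_insert:
  fixes c :: "'e \<Rightarrow> bool"
  assumes colour: "proper_edge_colouring ends (F - {e}) c" and "finite F"
    and sparse: "card (delta ends F (fst (ends e)) \<union> delta ends F (snd (ends e)) - {e}) \<le> 1"
  shows "\<exists>x. proper_edge_colouring ends F (c(e := x))"
proof -
  let ?N = "delta ends F (fst (ends e)) \<union> delta ends F (snd (ends e)) - {e}"
  have "finite ?N" using \<open>finite F\<close> unfolding delta_def by auto
  then obtain x where x: "\<forall>g\<in>?N. c g \<noteq> x"
    using sparse by (metis (full_types) card_le_Suc0_iff_eq One_nat_def)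
  have "inj_on (c(e := x)) (delta ends F v)" for v
  proof (cases "e \<in> delta ends F v")
    case True
    then have "v = fst (ends e) \<or> v = snd (ends e)" unfolding delta_def incident_def by auto
    then have "delta ends (F - {e}) v \<subseteq> ?N" unfolding delta_def by auto
    moreover have "delta ends F v = insert e (delta ends (F - {e}) v)"
      using True unfolding delta_def by auto
    ultimately show ?thesis using colour x unfolding proper_edge_colouring_def
      by (auto simp: inj_on_def)
  next
    case False
    then have "delta ends F v = delta ends (F - {e}) v" unfolding delta_def by auto
    then show ?thesis using False colour unfolding proper_edge_colouring_def
      by (metis (mono_tags) fun_upd_other inj_on_cong)
  qed
  then show ?thesis unfolding proper_edge_colouring_def by blast
qed

(* The path b' -e'- a -e- b -e''- a'', where a and b are the ends of e and have no further
   edges. Contracting it deletes e' and e'' and reroutes e to join a'' and b'; in the bipartite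
   case a'' and b' lie on the same sides as a and b, so bipartiteness is preserved. *)
locale path_contraction =
  fixes ends :: "'e \<Rightarrow> 'v \<times> 'v" and F :: "'e set" and e e' e'' :: 'e and a'' b' :: 'v
  assumes e_in: "e \<in> F"
    and edges_ne: "e' \<noteq> e" "e'' \<noteq> e" "e' \<noteq> e''"
    and delta_fst: "delta ends F (fst (ends e)) = {e, e'}"
    and delta_snd: "delta ends F (snd (ends e)) = {e, e''}"
    and incident_e': "\<And>w. incident ends w e' \<longleftrightarrow> w = fst (ends e) \<or> w = b'"
    and incident_e'': "\<And>w. incident ends w e'' \<longleftrightarrow> w = snd (ends e) \<or> w = a''"
    and distinct_ends: "distinct [fst (ends e), snd (ends e), a'', b']"
begin

lemma outer_edges_in: "e' \<in> F" "e'' \<in> F"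
  using delta_fst delta_snd unfolding delta_def by auto

lemma card_contracted_less: "finite F \<Longrightarrow> card (F - {e', e''}) < card F"
  using outer_edges_in by (intro psubset_card_mono) auto

lemma contracted_sides_differ:
  fixes s :: "'v \<Rightarrow> bool"
  assumes "\<forall>f\<in>F. s (fst (ends f)) \<noteq> s (snd (ends f))"
  shows "\<forall>f\<in>F - {e', e''}. s (fst ((ends(e := (a'', b'))) f)) \<noteq> s (snd ((ends(e := (a'', b'))) f))"
proof -
  have "s (fst (ends e)) \<noteq> s b'" "s (snd (ends e)) \<noteq> s a''"
    using assms outer_edges_in incident_e' incident_e'' unfolding incident_def by metis+
  moreover have "s (fst (ends e)) \<noteq> s (snd (ends e))" using assms e_in by blast
  ultimately have "s a'' \<noteq> s b'" by blast
  then show ?thesis using assms by auto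
qed

lemma card_delta_contracted_le_2:
  assumes "finite F" "\<forall>v. card (delta ends F v) \<le> 2"
  shows "card (delta (ends(e := (a'', b'))) (F - {e', e''}) v) \<le> 2"
proof -
  consider "v = a''" | "v = b'" | "v \<noteq> a''" "v \<noteq> b'" by blast
  then show ?thesis
  proof cases
    case 1
    then have "e'' \<in> delta ends F v" using incident_e'' outer_edges_in unfolding delta_def by auto
    then show ?thesis using card_delta_reroute_le[OF assms(1) assms(2)[rule_format]] by blast
  next
    case 2
    then have "e' \<in> delta ends F v" using incident_e' outer_edges_in unfolding delta_def by auto
    then show ?thesis using card_delta_reroute_le[OF assms(1) assms(2)[rule_format]] by blast
  next
    case 3
    then have "delta (ends(e := (a'', b'))) (F - {e', e''}) v \<subseteq> delta ends (F - {e', e''}) v"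
      by (rule delta_fun_upd_subset(2))
    then have "card (delta (ends(e := (a'', b'))) (F - {e', e''}) v) \<le> card (delta ends (F - {e', e''}) v)"
      using assms(1) by (intro card_mono) (auto simp: delta_def)
    also have "\<dots> \<le> card (delta ends F v)" using assms(1) by (intro card_delta_mono) auto
    finally show ?thesis using assms(2) by (meson order_trans)
  qed
qed

lemma proper_edge_colouring_expand:
  fixes c :: "'e \<Rightarrow> bool"
  assumes colour: "proper_edge_colouring (ends(e := (a'', b'))) (F - {e', e''}) c"
  shows "proper_edge_colouring ends F (c(e' := c e, e'' := c e, e := \<not> c e))"
proof -
  let ?c' = "c(e' := c e, e'' := c e, e := \<not> c e)"
  let ?h = "id(e' := e, e'' := e)"
  obtain a b where ab: "fst (ends e) = a" "snd (ends e) = b" by blast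
  note delta_a = delta_fst[unfolded ab] and delta_b = delta_snd[unfolded ab]
    and ends_e' = incident_e'[unfolded ab] and ends_e'' = incident_e''[unfolded ab]
  have ends_e: "\<And>w. incident ends w e \<longleftrightarrow> w = a \<or> w = b"
    unfolding incident_def ab[symmetric] by auto
  have "a'' \<noteq> b'" using distinct_ends by simp
  have "inj_on ?c' (delta ends F v)" for v
  proof (cases "v = a \<or> v = b")
    case True
    then have "delta ends F v = {e, e'} \<or> delta ends F v = {e, e''}"
      using delta_a delta_b by blast
    then show ?thesis using edges_ne by (elim disjE) simp_all
  next
    case False
    have e_notin: "e \<notin> delta ends F v" using False ends_e unfolding delta_def by auto
    have "\<not> (e' \<in> delta ends F v \<and> e'' \<in> delta ends F v)"
      using False ends_e' ends_e'' \<open>a'' \<noteq> b'\<close> unfolding delta_def by auto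
    then have h_inj: "inj_on ?h (delta ends F v)"
      using e_notin unfolding inj_on_def by auto
    have h_image: "?h ` delta ends F v \<subseteq> delta (ends(e := (a'', b'))) (F - {e', e''}) v"
    proof
      fix g assume "g \<in> ?h ` delta ends F v"
      then obtain f where f: "f \<in> F" "incident ends v f" and g: "g = ?h f"
        unfolding delta_def by auto
      have "g = e \<Longrightarrow> v = a'' \<or> v = b'"
        using f g False ends_e ends_e' ends_e'' edges_ne by (auto split: if_splits)
      then show "g \<in> delta (ends(e := (a'', b'))) (F - {e', e''}) v"
        using f g e_in edges_ne unfolding delta_def incident_def by auto
    qed
    have "inj_on (c \<circ> ?h) (delta ends F v)"
      using colour h_inj h_image unfolding proper_edge_colouring_def
      by (blast intro: comp_inj_on inj_on_subset)
    moreover have "\<And>g. g \<in> delta ends F v \<Longrightarrow> ?c' g = (c \<circ> ?h) g"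
      using e_notin by auto
    ultimately show ?thesis using inj_on_cong by blast
  qed
  then show ?thesis unfolding proper_edge_colouring_def by blast
qed

end

lemma sparse_edge_or_path_contraction:
  fixes s :: "'v \<Rightarrow> bool"
  assumes fin: "finite F" and sides: "\<forall>f\<in>F. s (fst (ends f)) \<noteq> s (snd (ends f))"
    and degree: "\<forall>v. card (delta ends F v) \<le> 2" and "e \<in> F"
  shows "card (delta ends F (fst (ends e)) \<union> delta ends F (snd (ends e)) - {e}) \<le> 1
    \<or> (\<exists>e' e'' a'' b'. path_contraction ends F e e' e'' a'' b')"
proof (cases "card (delta ends F (fst (ends e)) \<union> delta ends F (snd (ends e)) - {e}) \<le> 1")
  case False
  obtain a b where ab: "fst (ends e) = a" "snd (ends e) = b" by blast
  from False have many: "\<not> card ((delta ends F a - {e}) \<union> (delta ends F b - {e})) \<le> 1"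
    unfolding ab by (simp add: Un_Diff)
  have fin_delta: "finite (delta ends F v)" for v using fin unfolding delta_def by auto
  have e_at: "e \<in> delta ends F a" "e \<in> delta ends F b"
    using \<open>e \<in> F\<close> ab unfolding delta_def incident_def by auto
  have "card (delta ends F a - {e}) \<le> 1" "card (delta ends F b - {e}) \<le> 1"
    using degree[rule_format, of a] degree[rule_format, of b] e_at fin_delta
    by (simp_all add: card_Diff_singleton)
  moreover from this have "delta ends F a - {e} \<noteq> {}" "delta ends F b - {e} \<noteq> {}"
    using many by fastforce+
  ultimately obtain e' e'' where delta_a: "delta ends F a - {e} = {e'}"
    and delta_b: "delta ends F b - {e} = {e''}"
    using fin_delta by (metis singleton_if_card_le_1 finite_Diff)
  have "e' \<noteq> e''"
  proof
    assume "e' = e''"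
    then have "(delta ends F a - {e}) \<union> (delta ends F b - {e}) = {e'}" using delta_a delta_b by simp
    then show False using many by simp
  qed
  have "e' \<in> F" "incident ends a e'" "e'' \<in> F" "incident ends b e''"
    using delta_a delta_b unfolding delta_def by auto
  obtain b' where ends_e': "\<And>w. incident ends w e' \<longleftrightarrow> w = a \<or> w = b'"
    using incident_other_endpoint[OF \<open>incident ends a e'\<close>] by blast
  obtain a'' where ends_e'': "\<And>w. incident ends w e'' \<longleftrightarrow> w = b \<or> w = a''"
    using incident_other_endpoint[OF \<open>incident ends b e''\<close>] by blast
  have "e'' \<notin> delta ends F a" "e' \<notin> delta ends F b"
    using delta_a delta_b \<open>e' \<noteq> e''\<close> by (metis Diff_iff singletonD singletonI)+
  then have "a \<noteq> a''" "b \<noteq> b'"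
    using ends_e' ends_e'' \<open>e' \<in> F\<close> \<open>e'' \<in> F\<close> unfolding delta_def by auto
  moreover have "s a \<noteq> s b" using sides \<open>e \<in> F\<close> ab by blast
  moreover have "s a \<noteq> s b'" "s b \<noteq> s a''"
    using sides \<open>e' \<in> F\<close> \<open>e'' \<in> F\<close> ends_e' ends_e'' unfolding incident_def by metis+
  ultimately have "distinct [a, b, a'', b']" by auto
  then have "path_contraction ends F e e' e'' a'' b'"
    using \<open>e \<in> F\<close> \<open>e' \<noteq> e''\<close> delta_a delta_b e_at ends_e' ends_e''
    unfolding path_contraction_def ab by auto
  then show ?thesis by blast
qed simp

theorem bipartite_degree_le_2_edge_colourable:
  fixes F :: "'e set" and ends :: "'e \<Rightarrow> 'v \<times> 'v" and s :: "'v \<Rightarrow> bool"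
  assumes "finite F" and "\<forall>e\<in>F. s (fst (ends e)) \<noteq> s (snd (ends e))"
    and "\<forall>v. card (delta ends F v) \<le> 2"
  shows "\<exists>c :: 'e \<Rightarrow> bool. proper_edge_colouring ends F c"
  using assms
proof (induction "card F" arbitrary: F ends rule: less_induct)
  case less
  note fin = less.prems(1) and sides = less.prems(2) and degree = less.prems(3)
  show ?case
  proof (cases "F = {}")
    case True
    then show ?thesis unfolding proper_edge_colouring_def delta_def by auto
  next
    case False
    then obtain e where "e \<in> F" by auto
    from sparse_edge_or_path_contraction[OF less.prems \<open>e \<in> F\<close>] show ?thesis
    proof (elim disjE exE)
      assume sparse: "card (delta ends F (fst (ends e)) \<union> delta ends F (snd (ends e)) - {e}) \<le> 1"
      have "\<forall>v. card (delta ends (F - {e}) v) \<le> 2"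
        using le_trans[OF card_delta_mono[OF Diff_subset fin] degree[rule_format]] by blast
      then obtain c :: "'e \<Rightarrow> bool" where "proper_edge_colouring ends (F - {e}) c"
        using less.hyps[OF card_Diff1_less[OF fin \<open>e \<in> F\<close>]] fin sides by blast
      then show ?thesis using proper_edge_colouring_insert[OF _ fin sparse] by blast
    next
      fix e' e'' a'' b' assume "path_contraction ends F e e' e'' a'' b'"
      then interpret path_contraction ends F e e' e'' a'' b' .
      obtain c :: "'e \<Rightarrow> bool"
        where "proper_edge_colouring (ends(e := (a'', b'))) (F - {e', e''}) c"
        using less.hyps[OF card_contracted_less[OF fin]] fin contracted_sides_differ[OF sides]
          card_delta_contracted_le_2[OF fin degree] by blast
      then show ?thesis using proper_edge_colouring_expand by blast
    qed
  qed
qed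

section \<open>Decomposition into seven admissible sets\<close>

text \<open>Either alternative keeps the load at v within its capacity (\<open>sum_le_capacity\<close>).\<close>

definition admissible :: "('e \<Rightarrow> 'v \<times> 'v) \<Rightarrow> ('v \<Rightarrow> 'e set) \<Rightarrow> 'e set \<Rightarrow> bool" where
  "admissible ends L X \<longleftrightarrow> (\<forall>v. delta ends X v \<inter> L v = {} \<or> card (delta ends X v) \<le> 1)"

locale bipartite_heavy_edges =
  fixes ends :: "'e \<Rightarrow> 'v \<times> 'v" and M :: "'e set" and s :: "'v \<Rightarrow> bool" and L :: "'v \<Rightarrow> 'e set"
  assumes finite_M: "finite M"
    and sides_differ: "\<And>e. e \<in> M \<Longrightarrow> s (fst (ends e)) \<noteq> s (snd (ends e))"
    and L_subset: "\<And>v. L v \<subseteq> delta ends M v"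
    and card_L: "\<And>v. card (L v) \<le> 2"
begin

text \<open>Every edge of M has exactly one endpoint on side x, and heavy_on x e says that e is
  heavy at that endpoint.\<close>

definition heavy_on :: "bool \<Rightarrow> 'e \<Rightarrow> bool" where
  "heavy_on x e \<longleftrightarrow> (\<exists>v. s v = x \<and> e \<in> L v)"

lemma finite_L: "finite (L v)"
  by (rule finite_subset[OF L_subset]) (simp add: delta_def finite_M)

lemma incident_same_side_eq:
  "e \<in> M \<Longrightarrow> incident ends u e \<Longrightarrow> incident ends v e \<Longrightarrow> s u = s v \<Longrightarrow> u = v"
  using sides_differ unfolding incident_def by metis

lemma L_if_heavy_on:
  assumes "e \<in> M" "incident ends v e" "heavy_on (s v) e"
  shows "e \<in> L v"
proof -
  obtain u where "s u = s v" "e \<in> L u" using assms(3) unfolding heavy_on_def by blast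
  moreover have "incident ends u e" using L_subset \<open>e \<in> L u\<close> unfolding delta_def by blast
  ultimately show ?thesis using incident_same_side_eq assms(1,2) by metis
qed

lemma admissibleI:
  assumes "\<And>v. (\<forall>e\<in>delta ends X v. \<not> heavy_on (s v) e) \<or> card (delta ends X v) \<le> 1"
  shows "admissible ends L X"
  using assms unfolding admissible_def heavy_on_def by blast

lemma admissible_light: "admissible ends L {e \<in> M. \<not> heavy_on True e \<and> \<not> heavy_on False e}"
proof (rule admissibleI)
  fix v
  show "(\<forall>e\<in>delta ends {e \<in> M. \<not> heavy_on True e \<and> \<not> heavy_on False e} v. \<not> heavy_on (s v) e)
    \<or> card (delta ends {e \<in> M. \<not> heavy_on True e \<and> \<not> heavy_on False e} v) \<le> 1"
    unfolding delta_def by (cases "s v") auto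
qed

lemma admissible_one_sided:
  assumes rank: "\<And>v. inj_on (r v) (L v)"
  shows "admissible ends L {e \<in> M. \<not> heavy_on (\<not> x) e \<and> (\<exists>v. s v = x \<and> e \<in> L v \<and> r v e = k)}"
    (is "admissible ends L ?X")
proof (rule admissibleI)
  fix v
  show "(\<forall>e\<in>delta ends ?X v. \<not> heavy_on (s v) e) \<or> card (delta ends ?X v) \<le> 1"
  proof (cases "s v = x")
    case True
    have "e \<in> L v \<and> r v e = k" if "e \<in> delta ends ?X v" for e
    proof -
      have "e \<in> M" "incident ends v e" "\<exists>u. s u = x \<and> e \<in> L u \<and> r u e = k"
        using that unfolding delta_def by auto
      then obtain u where "e \<in> M" "incident ends v e" "s u = s v" "e \<in> L u" "r u e = k"
        using True by blast
      moreover have "incident ends u e" using L_subset \<open>e \<in> L u\<close> unfolding delta_def by blast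
      ultimately show ?thesis using incident_same_side_eq by metis
    qed
    then have "delta ends ?X v \<subseteq> L v" and "\<forall>e\<in>delta ends ?X v. r v e = k" by blast+
    then show ?thesis using card_le_1_if_inj_on_const[OF inj_on_subset[OF rank]] by blast
  next
    case False
    then have "s v = (\<not> x)" by blast
    then show ?thesis by (simp add: delta_def)
  qed
qed

lemma delta_two_sided_subset_L: "delta ends {e \<in> M. heavy_on True e \<and> heavy_on False e} v \<subseteq> L v"
proof
  fix e assume "e \<in> delta ends {e \<in> M. heavy_on True e \<and> heavy_on False e} v"
  then have "e \<in> M" "incident ends v e" "heavy_on True e" "heavy_on False e"
    unfolding delta_def by auto
  then show "e \<in> L v" using L_if_heavy_on by (cases "s v") auto
qed

lemma cover_by_seven_admissible:
  "\<exists>Xs. length Xs = 7 \<and> (\<forall>X\<in>set Xs. X \<subseteq> M \<and> admissible ends L X) \<and> M \<subseteq> \<Union>(set Xs)"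
proof -
  obtain r :: "'v \<Rightarrow> 'e \<Rightarrow> bool" where rank: "\<And>v. inj_on (r v) (L v)"
    using inj_on_bool_if_card_le_2[OF finite_L card_L] by metis
  define T where "T = {e \<in> M. heavy_on True e \<and> heavy_on False e}"
  have "card (delta ends T v) \<le> 2" for v
    using delta_two_sided_subset_L card_L finite_L unfolding T_def by (meson card_mono order_trans)
  then obtain c :: "'e \<Rightarrow> bool" where colour: "proper_edge_colouring ends T c"
    using bipartite_degree_le_2_edge_colourable[of T s ends] finite_M sides_differ
    unfolding T_def by auto
  define one_sided where
    "one_sided x k = {e \<in> M. \<not> heavy_on (\<not> x) e \<and> (\<exists>v. s v = x \<and> e \<in> L v \<and> r v e = k)}" for x k
  define colour_class where "colour_class k = {e \<in> T. c e = k}" for k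
  define Xs where "Xs = [{e \<in> M. \<not> heavy_on True e \<and> \<not> heavy_on False e},
    one_sided True True, one_sided True False, one_sided False True, one_sided False False,
    colour_class True, colour_class False]"
  have "admissible ends L (one_sided x k)" for x k
    unfolding one_sided_def by (rule admissible_one_sided[OF rank])
  moreover have "admissible ends L (colour_class k)" for k
    using card_delta_colour_class_le_1[OF colour] unfolding admissible_def colour_class_def by blast
  ultimately have "\<forall>X\<in>set Xs. admissible ends L X"
    using admissible_light unfolding Xs_def by simp
  moreover have "\<forall>X\<in>set Xs. X \<subseteq> M" unfolding Xs_def one_sided_def colour_class_def T_def by auto
  moreover have "M \<subseteq> \<Union>(set Xs)"
    unfolding Xs_def one_sided_def colour_class_def T_def heavy_on_def by auto
  ultimately show ?thesis unfolding Xs_def by (intro exI[of _ Xs]) (simp add: Xs_def)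
qed

end

lemma bipartite_sides:
  assumes "bipartite V E ends"
  obtains A where "\<forall>e\<in>E. (fst (ends e) \<in> A) \<noteq> (snd (ends e) \<in> A)"
proof -
  obtain A B where "A \<inter> B = {}" and "\<forall>e\<in>E. (fst (ends e) \<in> A \<and> snd (ends e) \<in> B)
      \<or> (fst (ends e) \<in> B \<and> snd (ends e) \<in> A)"
    using assms unfolding bipartite_def by blast
  then have "\<forall>e\<in>E. (fst (ends e) \<in> A) \<noteq> (snd (ends e) \<in> A)" by blast
  then show thesis by (rule that)
qed

lemma top_two_exists:
  assumes "finite S"
  shows "\<exists>L. top_two w S L"
proof (cases "card S \<le> 2")
  case True
  then show ?thesis unfolding top_two_def by (intro exI[of _ S]) auto
next
  case False
  then have "S \<noteq> {}" by auto
  then obtain e1 where e1: "e1 \<in> S" "\<forall>y\<in>S. w y \<le> w e1"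
    using exists_max_weight[OF assms] by blast
  have "S - {e1} \<noteq> {}" using False card_le_Suc0_iff_eq[OF assms] by auto
  then obtain e2 where e2: "e2 \<in> S - {e1}" "\<forall>y\<in>S - {e1}. w y \<le> w e2"
    using exists_max_weight[of "S - {e1}" w] assms by blast
  have "top_two w S {e1, e2}" unfolding top_two_def using e1 e2 False by auto
  then show ?thesis by blast
qed

lemma sum_le_capacity:
  fixes w :: "'e \<Rightarrow> real"
  assumes "finite S" "T \<subseteq> S" "\<forall>e\<in>S. 0 \<le> w e \<and> w e \<le> B" "0 \<le> B"
    and "sum w (S - L) \<le> B" and "T \<inter> L = {} \<or> card T \<le> 1"
  shows "sum w T \<le> B"
  using assms(6)
proof
  assume "T \<inter> L = {}"
  then have "sum w T \<le> sum w (S - L)"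
    using assms(1-3) by (intro sum_mono2) auto
  then show ?thesis using assms(5) by linarith
next
  assume "card T \<le> 1"
  show ?thesis
  proof (cases "T = {}")
    case False
    moreover have "finite T" using assms(1,2) finite_subset by blast
    ultimately obtain x where "T = {x}" using singleton_if_card_le_1 \<open>card T \<le> 1\<close> by blast
    then show ?thesis using assms(2,3) by auto
  qed (simp add: assms(4))
qed

lemma sum_Union_le_sum_list:
  fixes p :: "'e \<Rightarrow> real"
  assumes "\<forall>X\<in>set Xs. finite X" "\<forall>e\<in>\<Union>(set Xs). 0 \<le> p e"
  shows "sum p (\<Union>(set Xs)) \<le> (\<Sum>X\<leftarrow>Xs. sum p X)"
  using assms
proof (induction Xs)
  case (Cons X Xs)
  have "sum p (\<Union>(set (X # Xs))) \<le> sum p X + sum p (\<Union>(set Xs))"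
    using Cons.prems sum_Un[of X "\<Union>(set Xs)" p] sum_nonneg[of "X \<inter> \<Union>(set Xs)" p] by simp
  then show ?case using Cons by simp
qed simp

lemma cover_has_member_above_average:
  fixes p :: "'e \<Rightarrow> real"
  assumes "finite M" "\<forall>e\<in>M. 0 \<le> p e" "Xs \<noteq> []"
    and "\<forall>X\<in>set Xs. X \<subseteq> M" "M \<subseteq> \<Union>(set Xs)"
  shows "\<exists>X\<in>set Xs. sum p M / length Xs \<le> sum p X"
proof (rule ccontr)
  assume "\<not> ?thesis"
  then have "(\<Sum>X\<leftarrow>Xs. sum p X) < (\<Sum>X\<leftarrow>Xs. sum p M / length Xs)"
    using assms(3) by (intro sum_list_strict_mono) auto
  also have "\<dots> = sum p M" using assms(3) by (simp add: sum_list_triv)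
  finally have "(\<Sum>X\<leftarrow>Xs. sum p X) < sum p M" .
  moreover have "\<Union>(set Xs) = M" using assms(4,5) by blast
  moreover have "\<forall>X\<in>set Xs. finite X" using assms(1,4) finite_subset by blast
  ultimately show False using sum_Union_le_sum_list[of Xs p] assms(2) by simp
qed

theorem lemma6:
  fixes V :: "'v set" and E :: "'e set" and ends :: "'e \<Rightarrow> 'v \<times> 'v"
    and b :: "'v \<Rightarrow> real" and d :: "'v \<Rightarrow> 'e \<Rightarrow> real" and p :: "'e \<Rightarrow> real"
    and M' :: "'e set"
  assumes "finite V" and "finite E"
    and "bipartite V E ends"
    and "\<forall>v\<in>V. b v \<ge> 0"
    and "\<forall>v\<in>V. \<forall>e\<in>delta ends E v. 0 \<le> d v e \<and> d v e \<le> b v"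
    and "\<forall>e\<in>E. p e \<ge> 0"
    and "M' \<subseteq> E"
    and "\<forall>v\<in>V. \<forall>L. top_two (d v) (delta ends M' v) L \<longrightarrow>
            (\<Sum>e\<in>delta ends M' v - L. d v e) \<le> b v"
  shows "\<exists>M. M \<subseteq> M' \<and> (\<forall>v\<in>V. (\<Sum>e\<in>delta ends M v. d v e) \<le> b v) \<and>
             (\<Sum>e\<in>M. p e) \<ge> (\<Sum>e\<in>M'. p e) / 7"
proof -
  obtain A where sides: "\<forall>e\<in>E. (fst (ends e) \<in> A) \<noteq> (snd (ends e) \<in> A)"
    using bipartite_sides[OF assms(3)] by blast
  have "finite M'" using assms(2,7) finite_subset by blast
  then have "finite (delta ends M' v)" for v unfolding delta_def by simp
  then have "\<forall>v. \<exists>L. top_two (d v) (delta ends M' v) L" using top_two_exists by blast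
  then obtain L where L: "\<And>v. top_two (d v) (delta ends M' v) (L v)" by metis
  interpret bipartite_heavy_edges ends M' "\<lambda>v. v \<in> A" L
    using \<open>finite M'\<close> sides assms(7) L unfolding top_two_def by unfold_locales auto
  obtain Xs where Xs: "length Xs = 7" "\<forall>X\<in>set Xs. X \<subseteq> M' \<and> admissible ends L X"
    "M' \<subseteq> \<Union>(set Xs)"
    using cover_by_seven_admissible by blast
  have feasible: "(\<Sum>e\<in>delta ends X v. d v e) \<le> b v" if "X \<in> set Xs" "v \<in> V" for X v
  proof (rule sum_le_capacity)
    show "delta ends X v \<subseteq> delta ends M' v" using Xs(2) that(1) by (intro delta_mono) blast
    show "\<forall>e\<in>delta ends M' v. 0 \<le> d v e \<and> d v e \<le> b v"
      using delta_mono[OF assms(7), of ends v] assms(5) that(2) by blast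
    show "delta ends X v \<inter> L v = {} \<or> card (delta ends X v) \<le> 1"
      using Xs(2) that(1) unfolding admissible_def by blast
  qed (use \<open>finite M'\<close> assms(4,8) L that(2) in \<open>auto simp: delta_def\<close>)
  have "\<exists>X\<in>set Xs. sum p M' / length Xs \<le> sum p X"
    by (rule cover_has_member_above_average[OF \<open>finite M'\<close>]) (use assms(6,7) Xs in auto)
  then obtain X where "X \<in> set Xs" "sum p M' / 7 \<le> sum p X" using Xs(1) by auto
  then show ?thesis using Xs(2) feasible by (intro exI[of _ X]) blast
qed

end
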